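(* Let $\mathsf{Prop}$ be a non-empty finite set of propositions and $\mathsf{L}$ any fragment of $\mathsf{CTL}(\mathsf{Prop})$. For every sample $\mathcal{S}=(\mathcal{P},\mathcal{N})$ of Kripke structures in $\mathcal{K}(\mathsf{Prop})$, if there is an $\mathcal{S}$-separating $\mathsf{L}$-formula, then there is one of size at most $2^n$, where $n:=\sum_{K\in\mathcal{P}\cup\mathcal{N}}|Q_K|$.
   Context: $\mathsf{CTL}(\mathsf{Prop})$-formulas: $\varphi::=p\mid\neg\varphi\mid\varphi\vee\varphi\mid\varphi\wedge\varphi\mid\mathcal{Q}\mathbf{X}\varphi\mid\mathcal{Q}\mathbf{F}\varphi\mid\mathcal{Q}\mathbf{G}\varphi\mid\mathcal{Q}(\varphi\,\mathbf{U}\,\varphi)$ with $p\in\mathsf{Prop}$, $\mathcal{Q}\in\{\exists,\forall\}$. A fragment is given by a subset of these operators; its formulas use only them. $\mathsf{sz}(\varphi)$ is the number of distinct subformulas. $\mathcal{K}(\mathsf{Prop})$: actionless Kripke structures $K=(Q,I,\delta,P,\pi)$ with $Q=Q_K$ finite non-empty, $I\subseteq Q$ non-empty, $\delta:Q\to2^Q$, $P\subseteq\mathsf{Prop}$, $\pi:Q\to2^P$. $\mathsf{Path}(q)$: infinite $\rho\in q\cdot Q^\omega$ with $\rho[i+1]\in\delta(\rho[i])$ for all $i$. Semantics: $q\models p$ iff $p\in\pi(q)$; Boolean connectives as usual; $q\models\mathcal{Q}\mathbf{X}\varphi$ iff $\mathcal{Q}\rho\in\mathsf{Path}(q)$, $\rho[1]\models\varphi$;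 $q\models\mathcal{Q}\mathbf{F}\varphi$ iff $\mathcal{Q}\rho\in\mathsf{Path}(q)$, $\exists i$, $\rho[i]\models\varphi$; $q\models\mathcal{Q}\mathbf{G}\varphi$ iff $\mathcal{Q}\rho\in\mathsf{Path}(q)$, $\forall i$, $\rho[i]\models\varphi$; $q\models\mathcal{Q}(\varphi_1\mathbf{U}\varphi_2)$ iff $\mathcal{Q}\rho\in\mathsf{Path}(q)$, $\exists i$, $\rho[i]\models\varphi_2$ and $\forall j<i$, $\rho[j]\models\varphi_1$. $K\models\varphi$ iff $q\models\varphi$ for all $q\in I$. A sample is a pair of finite sets of structures; a formula is $\mathcal{S}$-separating if satisfied by all structures in $\mathcal{P}$ and by none in $\mathcal{N}$. *)

theory Defs
  imports Main
begin

datatype 'p ctl =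
    Atom 'p
  | Neg "'p ctl"
  | Or "'p ctl" "'p ctl"
  | And "'p ctl" "'p ctl"
  | ExX "'p ctl" | AllX "'p ctl"
  | ExF "'p ctl" | AllF "'p ctl"
  | ExG "'p ctl" | AllG "'p ctl"
  | ExU "'p ctl" "'p ctl" | AllU "'p ctl" "'p ctl"

text \<open>Operators from which a fragment is built (atoms are always allowed).\<close>
datatype ctl_op = OpNeg | OpOr | OpAnd | OpEX | OpAX | OpEF | OpAF | OpEG | OpAG | OpEU | OpAU

fun in_frag :: "ctl_op set \<Rightarrow> 'p set \<Rightarrow> 'p ctl \<Rightarrow> bool" where
  "in_frag L Pr (Atom p) = (p \<in> Pr)"
| "in_frag L Pr (Neg f) = (OpNeg \<in> L \<and> in_frag L Pr f)"
| "in_frag L Pr (Or f g) = (OpOr \<in> L \<and> in_frag L Pr f \<and> in_frag L Pr g)"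
| "in_frag L Pr (And f g) = (OpAnd \<in> L \<and> in_frag L Pr f \<and> in_frag L Pr g)"
| "in_frag L Pr (ExX f) = (OpEX \<in> L \<and> in_frag L Pr f)"
| "in_frag L Pr (AllX f) = (OpAX \<in> L \<and> in_frag L Pr f)"
| "in_frag L Pr (ExF f) = (OpEF \<in> L \<and> in_frag L Pr f)"
| "in_frag L Pr (AllF f) = (OpAF \<in> L \<and> in_frag L Pr f)"
| "in_frag L Pr (ExG f) = (OpEG \<in> L \<and> in_frag L Pr f)"
| "in_frag L Pr (AllG f) = (OpAG \<in> L \<and> in_frag L Pr f)"
| "in_frag L Pr (ExU f g) = (OpEU \<in> L \<and> in_frag L Pr f \<and> in_frag L Pr g)"
| "in_frag L Pr (AllU f g) = (OpAU \<in> L \<and> in_frag L Pr f \<and> in_frag L Pr g)"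

fun subformulas :: "'p ctl \<Rightarrow> 'p ctl set" where
  "subformulas (Atom p) = {Atom p}"
| "subformulas (Neg f) = insert (Neg f) (subformulas f)"
| "subformulas (Or f g) = insert (Or f g) (subformulas f \<union> subformulas g)"
| "subformulas (And f g) = insert (And f g) (subformulas f \<union> subformulas g)"
| "subformulas (ExX f) = insert (ExX f) (subformulas f)"
| "subformulas (AllX f) = insert (AllX f) (subformulas f)"
| "subformulas (ExF f) = insert (ExF f) (subformulas f)"
| "subformulas (AllF f) = insert (AllF f) (subformulas f)"
| "subformulas (ExG f) = insert (ExG f) (subformulas f)"
| "subformulas (AllG f) = insert (AllG f) (subformulas f)"
| "subformulas (ExU f g) = insert (ExU f g) (subformulas f \<union> subformulas g)"
| "subformulas (AllU f g) = insert (AllU f g) (subformulas f \<union> subformulas g)"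

definition sz :: "'p ctl \<Rightarrow> nat" where
  "sz f = card (subformulas f)"

record ('s, 'p) kripke =
  states :: "'s set"
  init :: "'s set"
  trans :: "'s \<Rightarrow> 's set"
  props :: "'p set"
  lab :: "'s \<Rightarrow> 'p set"

definition kripke_in :: "'p set \<Rightarrow> ('s, 'p) kripke \<Rightarrow> bool" where
  "kripke_in Pr K \<longleftrightarrow>
     finite (states K) \<and> states K \<noteq> {} \<and>
     init K \<subseteq> states K \<and> init K \<noteq> {} \<and>
     (\<forall>q \<in> states K. trans K q \<subseteq> states K) \<and>
     props K \<subseteq> Pr \<and>
     (\<forall>q \<in> states K. lab K q \<subseteq> props K)"

definition paths :: "('s, 'p) kripke \<Rightarrow> 's \<Rightarrow> (nat \<Rightarrow> 's) set" where
  "paths K q = {\<rho>. \<rho> 0 = q \<and> (\<forall>i. \<rho> (Suc i) \<in> trans K (\<rho> i))}"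

fun sat :: "('s, 'p) kripke \<Rightarrow> 's \<Rightarrow> 'p ctl \<Rightarrow> bool" where
  "sat K q (Atom p) = (p \<in> lab K q)"
| "sat K q (Neg f) = (\<not> sat K q f)"
| "sat K q (Or f g) = (sat K q f \<or> sat K q g)"
| "sat K q (And f g) = (sat K q f \<and> sat K q g)"
| "sat K q (ExX f) = (\<exists>\<rho> \<in> paths K q. sat K (\<rho> 1) f)"
| "sat K q (AllX f) = (\<forall>\<rho> \<in> paths K q. sat K (\<rho> 1) f)"
| "sat K q (ExF f) = (\<exists>\<rho> \<in> paths K q. \<exists>i. sat K (\<rho> i) f)"
| "sat K q (AllF f) = (\<forall>\<rho> \<in> paths K q. \<exists>i. sat K (\<rho> i) f)"
| "sat K q (ExG f) = (\<exists>\<rho> \<in> paths K q. \<forall>i. sat K (\<rho> i) f)"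
| "sat K q (AllG f) = (\<forall>\<rho> \<in> paths K q. \<forall>i. sat K (\<rho> i) f)"
| "sat K q (ExU f g) = (\<exists>\<rho> \<in> paths K q. \<exists>i. sat K (\<rho> i) g \<and> (\<forall>j<i. sat K (\<rho> j) f))"
| "sat K q (AllU f g) = (\<forall>\<rho> \<in> paths K q. \<exists>i. sat K (\<rho> i) g \<and> (\<forall>j<i. sat K (\<rho> j) f))"

definition models :: "('s, 'p) kripke \<Rightarrow> 'p ctl \<Rightarrow> bool" where
  "models K f \<longleftrightarrow> (\<forall>q \<in> init K. sat K q f)"

definition separating :: "('s, 'p) kripke set \<Rightarrow> ('s, 'p) kripke set \<Rightarrow> 'p ctl \<Rightarrow> bool" where
  "separating Pos Negs f \<longleftrightarrow> (\<forall>K \<in> Pos. models K f) \<and> (\<forall>K \<in> Negs. \<not> models K f)"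

end

theory Submission
  imports Defs
begin

text \<open>
  Take a separating formula of least size and identify each of its subformulas with the set of
  (structure, state) pairs of the sample at which it holds.  Two distinct subformulas \<open>a\<close>, \<open>b\<close>
  cannot have the same set: choosing \<open>b\<close> not a subformula of \<open>a\<close>, replacing \<open>b\<close> by \<open>a\<close> keeps the
  formula in the fragment, does not change its truth value at any state of the sample, and merges
  two subformulas, contradicting minimality.  Hence the subformulas inject into the powerset of
  the \<open>n\<close> pairs, and there are at most \<open>2^n\<close> of them.
\<close>

fun replace :: "'p ctl \<Rightarrow> 'p ctl \<Rightarrow> 'p ctl \<Rightarrow> 'p ctl" where
  "replace h g (Atom p) = (if Atom p = h then g else Atom p)"
| "replace h g (Neg f) = (if Neg f = h then g else Neg (replace h g f))"
| "replace h g (Or f1 f2) = (if Or f1 f2 = h then g else Or (replace h g f1) (replace h g f2))"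
| "replace h g (And f1 f2) = (if And f1 f2 = h then g else And (replace h g f1) (replace h g f2))"
| "replace h g (ExX f) = (if ExX f = h then g else ExX (replace h g f))"
| "replace h g (AllX f) = (if AllX f = h then g else AllX (replace h g f))"
| "replace h g (ExF f) = (if ExF f = h then g else ExF (replace h g f))"
| "replace h g (AllF f) = (if AllF f = h then g else AllF (replace h g f))"
| "replace h g (ExG f) = (if ExG f = h then g else ExG (replace h g f))"
| "replace h g (AllG f) = (if AllG f = h then g else AllG (replace h g f))"
| "replace h g (ExU f1 f2) = (if ExU f1 f2 = h then g else ExU (replace h g f1) (replace h g f2))"
| "replace h g (AllU f1 f2) =
     (if AllU f1 f2 = h then g else AllU (replace h g f1) (replace h g f2))"

definition sat_states :: "('s, 'p) kripke set \<Rightarrow> 'p ctl \<Rightarrow> (('s, 'p) kripke \<times> 's) set" where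
  "sat_states Ks f = {(K, q). K \<in> Ks \<and> q \<in> states K \<and> sat K q f}"

lemma subformulas_refl: "f \<in> subformulas f"
  by (cases f) auto

lemma subformulas_trans: "k \<in> subformulas f \<Longrightarrow> subformulas k \<subseteq> subformulas f"
  by (induction f) (auto simp: subformulas_refl)

lemma finite_subformulas: "finite (subformulas f)"
  by (induction f) auto

lemma subformulas_antisym:
  assumes "g \<in> subformulas h" and "h \<in> subformulas g"
  shows "g = h"
proof -
  have size_less: "k = f \<or> size k < size f" if "k \<in> subformulas f" for k f :: "'p ctl"
    using that by (induction f) auto
  show ?thesis
    using size_less[OF assms(1)] size_less[OF assms(2)] by auto
qed

lemma in_frag_subformula: "k \<in> subformulas f \<Longrightarrow> in_frag L Pr f \<Longrightarrow> in_frag L Pr k"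
  by (induction f) auto

lemma in_frag_replace: "in_frag L Pr f \<Longrightarrow> in_frag L Pr g \<Longrightarrow> in_frag L Pr (replace h g f)"
  by (induction f) auto

lemma replace_self: "replace h g h = g"
  by (cases h) auto

lemma replace_nonoccurring: "h \<notin> subformulas f \<Longrightarrow> replace h g f = f"
  by (induction f) (auto simp: subformulas_refl)

lemma subformulas_replace:
  "subformulas (replace h g f) \<subseteq> replace h g ` subformulas f \<union> subformulas g"
  by (induction f) auto

lemma sz_replace_less:
  assumes a: "a \<in> subformulas f" and b: "b \<in> subformulas f"
    and "a \<noteq> b" and b_notin_a: "b \<notin> subformulas a"
  shows "sz (replace b a f) < sz f"
proof -
  have "subformulas a \<subseteq> replace b a ` subformulas f"
  proof
    fix k assume k: "k \<in> subformulas a"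
    then have "b \<notin> subformulas k"
      using subformulas_trans b_notin_a by blast
    then have "replace b a k = k"
      by (rule replace_nonoccurring)
    moreover have "k \<in> subformulas f"
      using subformulas_trans[OF a] k by blast
    ultimately show "k \<in> replace b a ` subformulas f"
      by (metis image_eqI)
  qed
  then have sub: "subformulas (replace b a f) \<subseteq> replace b a ` subformulas f"
    using subformulas_replace[of b a f] by blast
  have "replace b a a = replace b a b"
    using b_notin_a by (simp add: replace_nonoccurring replace_self)
  then have "\<not> inj_on (replace b a) (subformulas f)"
    using a b \<open>a \<noteq> b\<close> by (meson inj_onD)
  then have "card (replace b a ` subformulas f) < card (subformulas f)"
    using card_image_le[OF finite_subformulas] inj_on_iff_eq_card[OF finite_subformulas]
    by (metis le_neq_implies_less)
  then show ?thesis
    unfolding sz_def using sub card_mono[OF finite_imageI[OF finite_subformulas]]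
    by (meson le_less_trans)
qed

lemma paths_in_states:
  assumes "\<forall>q \<in> states K. trans K q \<subseteq> states K" and "q \<in> states K" and "\<rho> \<in> paths K q"
  shows "\<rho> i \<in> states K"
  using assms by (induction i) (auto simp: paths_def)

lemma sat_replace:
  assumes closed: "\<forall>q \<in> states K. trans K q \<subseteq> states K"
    and equiv: "\<forall>q \<in> states K. sat K q h = sat K q g"
    and "q \<in> states K"
  shows "sat K q (replace h g f) = sat K q f"
  using \<open>q \<in> states K\<close>
  by (induction f arbitrary: q) (use equiv paths_in_states[OF closed] in \<open>auto 4 4\<close>)

lemma separating_replace:
  assumes "\<forall>K \<in> Pos \<union> Negs. kripke_in Pr K"
    and "sat_states (Pos \<union> Negs) a = sat_states (Pos \<union> Negs) b"
    and "separating Pos Negs f"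
  shows "separating Pos Negs (replace b a f)"
proof -
  have "models K (replace b a f) = models K f" if K: "K \<in> Pos \<union> Negs" for K
  proof -
    have closed: "\<forall>q \<in> states K. trans K q \<subseteq> states K" and "init K \<subseteq> states K"
      using assms(1) K unfolding kripke_in_def by auto
    moreover have "\<forall>q \<in> states K. sat K q b = sat K q a"
      using assms(2) K unfolding sat_states_def by (auto simp: set_eq_iff)
    ultimately show ?thesis
      unfolding models_def using sat_replace[OF closed] by blast
  qed
  then show ?thesis
    using assms(3) unfolding separating_def by auto
qed

lemma inj_on_sat_states_if_minimal:
  assumes kripke: "\<forall>K \<in> Pos \<union> Negs. kripke_in Pr K"
    and f: "in_frag L Pr f" "separating Pos Negs f"
    and minimal: "\<forall>f'. in_frag L Pr f' \<and> separating Pos Negs f' \<longrightarrow> sz f \<le> sz f'"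
  shows "inj_on (sat_states (Pos \<union> Negs)) (subformulas f)"
proof (rule inj_onI, rule ccontr)
  fix g h
  assume g: "g \<in> subformulas f" and h: "h \<in> subformulas f" and "g \<noteq> h"
    and eq: "sat_states (Pos \<union> Negs) g = sat_states (Pos \<union> Negs) h"
  obtain a b where a: "a \<in> subformulas f" and b: "b \<in> subformulas f" and "a \<noteq> b"
    and "b \<notin> subformulas a" and ab: "sat_states (Pos \<union> Negs) a = sat_states (Pos \<union> Negs) b"
    using g h \<open>g \<noteq> h\<close> eq subformulas_antisym by metis
  have "sz (replace b a f) < sz f"
    using a b \<open>a \<noteq> b\<close> \<open>b \<notin> subformulas a\<close> by (rule sz_replace_less)
  moreover have "in_frag L Pr (replace b a f)"
    using f a in_frag_replace in_frag_subformula by blast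
  moreover have "separating Pos Negs (replace b a f)"
    using kripke ab f(2) by (rule separating_replace)
  ultimately show False
    using minimal by fastforce
qed

lemma sz_le_if_inj_on_sat_states:
  assumes "finite Ks" and "\<forall>K \<in> Ks. finite (states K)"
    and "inj_on (sat_states Ks) (subformulas f)"
  shows "sz f \<le> 2 ^ (\<Sum>K \<in> Ks. card (states K))"
proof -
  have "sz f = card (sat_states Ks ` subformulas f)"
    unfolding sz_def using card_image[OF assms(3)] by simp
  also have "\<dots> \<le> card (Pow (Sigma Ks states))"
    using assms(1,2) by (intro card_mono) (auto simp: sat_states_def)
  also have "\<dots> = 2 ^ (\<Sum>K \<in> Ks. card (states K))"
    using assms(1,2) by (simp add: card_Pow)
  finally show ?thesis .
qed

theorem corollary4:
  fixes Pr :: "'p set" and L :: "ctl_op set"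
    and Pos Negs :: "('s, 'p) kripke set"
  assumes "finite Pr" and "Pr \<noteq> {}"
    and "finite Pos" and "finite Negs"
    and "\<forall>K \<in> Pos \<union> Negs. kripke_in Pr K"
    and "\<exists>f. in_frag L Pr f \<and> separating Pos Negs f"
  shows "\<exists>f. in_frag L Pr f \<and> separating Pos Negs f \<and>
           sz f \<le> 2 ^ (\<Sum>K \<in> Pos \<union> Negs. card (states K))"
proof -
  let ?sep = "\<lambda>f. in_frag L Pr f \<and> separating Pos Negs f"
  obtain f where f: "?sep f" and minimal: "\<forall>f'. ?sep f' \<longrightarrow> sz f \<le> sz f'"
    using assms(6) ex_has_least_nat[of ?sep _ sz] by metis
  have "inj_on (sat_states (Pos \<union> Negs)) (subformulas f)"
    using inj_on_sat_states_if_minimal[OF assms(5)] f minimal by blast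
  moreover have "\<forall>K \<in> Pos \<union> Negs. finite (states K)"
    using assms(5) unfolding kripke_in_def by blast
  ultimately have "sz f \<le> 2 ^ (\<Sum>K \<in> Pos \<union> Negs. card (states K))"
    using assms(3,4) by (intro sz_le_if_inj_on_sat_states) auto
  then show ?thesis
    using f by blast
qed

end
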